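(* Let $\beta>0$. Consider the equation $$\beta z\,u'(z)+u(z)^2+u(z)=2\int_0^1u(zr)\,dr,\qquad z\in(0,\infty).$$ Up to a dilation $z\mapsto cz$ ($c>0$), there is a unique solution $u$ of this equation which is positive and increasing on $(0,\infty)$ with $u(0)=0$ and $u(\infty)=1$. It satisfies $$u(z)\sim z^{\alpha}\ \ (z\to0^+)\quad\text{(for a suitable choice of the dilation)},\qquad 1-u(z)\sim\hat c\,z^{-\hat\alpha}\ \ (z\to\infty)$$ for some constant $\hat c$, where $\alpha\in(0,1)$ and $\hat\alpha\in(0,\tfrac13)$ are determined by $$\beta=\frac{1-\alpha}{\alpha(1+\alpha)}=\frac{1-3\hat\alpha}{\hat\alpha(1-\hat\alpha)}.$$ *)

theory Defs
  imports "HOL-Analysis.Analysis" "HOL-Library.Landau_Symbols"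
begin

definition is_profile :: "real \<Rightarrow> (real \<Rightarrow> real) \<Rightarrow> bool" where
  "is_profile \<beta> u \<longleftrightarrow>
     (\<forall>z>0. u differentiable (at z)
            \<and> (\<lambda>r. u (z * r)) integrable_on {0..1}
            \<and> \<beta> * z * deriv u z + (u z)\<^sup>2 + u z = 2 * integral {0..1} (\<lambda>r. u (z * r)))
   \<and> (\<forall>z>0. u z > 0)
   \<and> strict_mono_on {0<..} u
   \<and> (u \<longlongrightarrow> 0) (at_right 0)
   \<and> (u \<longlongrightarrow> 1) at_top"

end

theory Submission
  imports Defs "HOL-Real_Asymp.Real_Asymp"
begin

text \<open>
  Write u(z) = logistic t with ln z = \<theta>(t), and the mean int_0^1 u(zr) dr = u - u (1 - u) s(t).
  The equation then becomes the system s' = F (logistic t) s, \<theta>' = \<beta> / (1 - 2 s), and a profile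
  corresponds to an orbit s connecting the equilibrium s0 = (1 - \<alpha> \<beta>) / 2 at t = -\<infinity> with
  s1 = (1 - \<alpha>h \<beta>) / 2 at t = +\<infinity>. In the variable y = e^t, and after multiplying by an
  integrating factor y^N, such an orbit is the fixed point of a contraction on bounded continuous
  functions. As s approaches s0 and s1 exponentially fast, \<theta>' tends to 1/\<alpha> and 1/\<alpha>h with
  integrable error, which gives the power laws at 0 and at \<infinity>.

  For uniqueness, take any profile v: the difference D between its mean and the mean predicted by
  the orbit along logit v satisfies z D' = - D / (1 - 2 s), so D^2 decreases; since |D| \<le> v
  tends to 0 at 0, D vanishes. Then \<theta>(logit v(z)) - ln z is constant, i.e. v is a dilation of u.
\<close>

definition logistic :: "real \<Rightarrow> real" where
  "logistic t = exp t / (1 + exp t)"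

lemma one_minus_logistic: "1 - logistic t = 1 / (1 + exp t)"
proof -
  have "1 + exp t \<noteq> 0" using exp_gt_zero[of t] by linarith
  thus ?thesis unfolding logistic_def by (simp add: field_simps)
qed

lemma logistic_pos: "0 < logistic t"
  unfolding logistic_def by (simp add: add_pos_pos)

lemma logistic_less_one: "logistic t < 1"
proof -
  have "0 < 1 + exp t"
    using exp_gt_zero[of t] by linarith
  thus ?thesis unfolding logistic_def by simp
qed

lemma logistic_le_exp: "logistic t \<le> exp t"
  unfolding logistic_def by (simp add: divide_le_eq add_pos_pos)

lemma one_minus_logistic_le_exp: "1 - logistic t \<le> exp (- t)"
  unfolding one_minus_logistic exp_minus inverse_eq_divide
  by (intro divide_left_mono) (auto intro!: mult_pos_pos add_pos_pos)

lemma logistic_strict_mono: "strict_mono logistic"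
proof
  fix a b :: real assume "a < b"
  hence "1 / (1 + exp b) < 1 / (1 + exp a)"
    by (intro divide_strict_left_mono) (auto intro!: add_pos_pos mult_pos_pos)
  thus "logistic a < logistic b" using one_minus_logistic[of a] one_minus_logistic[of b] by linarith
qed

lemma has_real_derivative_logistic:
  "(logistic has_real_derivative logistic t * (1 - logistic t)) (at t)"
proof -
  have "1 + exp t \<noteq> 0" using exp_gt_zero[of t] by linarith
  hence "(logistic has_real_derivative (exp t * (1 + exp t) - exp t * exp t) / (1 + exp t)\<^sup>2) (at t)"
    unfolding logistic_def[abs_def] by (auto intro!: derivative_eq_intros simp: power2_eq_square)
  moreover have "(exp t * (1 + exp t) - exp t * exp t) / (1 + exp t)\<^sup>2 = logistic t * (1 - logistic t)"
    unfolding one_minus_logistic unfolding logistic_def by (simp add: field_simps power2_eq_square)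
  ultimately show ?thesis by simp
qed

definition logit :: "real \<Rightarrow> real" where
  "logit v = ln (v / (1 - v))"

lemma logistic_logit: "0 < v \<Longrightarrow> v < 1 \<Longrightarrow> logistic (logit v) = v"
  unfolding logistic_def logit_def by (simp add: field_simps)

lemma has_real_derivative_logit:
  fixes v :: "real \<Rightarrow> real"
  assumes "(v has_real_derivative v') (at z)" "0 < v z" "v z < 1"
  shows "((\<lambda>z. logit (v z)) has_real_derivative v' / (v z * (1 - v z))) (at z)"
proof -
  have "((\<lambda>z. logit (v z)) has_real_derivative
      (v' * (1 - v z) + v z * v') / (1 - v z)\<^sup>2 / (v z / (1 - v z))) (at z)"
    unfolding logit_def using assms by (auto intro!: derivative_eq_intros simp: power2_eq_square)
  moreover have "v z \<noteq> 0" "1 - v z \<noteq> 0" using assms(2,3) by auto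
  hence "(v' * (1 - v z) + v z * v') / (1 - v z)\<^sup>2 / (v z / (1 - v z)) = v' / (v z * (1 - v z))"
    by (simp add: divide_simps power2_eq_square) (simp add: algebra_simps)
  ultimately show ?thesis by simp
qed

lemma tendsto_logistic_at_bot: "(logistic \<longlongrightarrow> 0) at_bot"
  unfolding logistic_def[abs_def] by real_asymp

lemma tendsto_logistic_at_top: "(logistic \<longlongrightarrow> 1) at_top"
  unfolding logistic_def[abs_def] by real_asymp

lemma has_integral_power_unit_interval: "((\<lambda>r::real. r ^ n) has_integral 1 / real (Suc n)) {0..1}"
proof -
  have "((\<lambda>r. r ^ Suc n / real (Suc n)) has_real_derivative x ^ n) (at x within {0..1})" for x
    using DERIV_cdivide[OF DERIV_pow[of "Suc n" x "{0..1}"], of "real (Suc n)"] by (simp del: of_nat_Suc)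
  hence "((\<lambda>r::real. r ^ n) has_integral 1 ^ Suc n / real (Suc n) - 0 ^ Suc n / real (Suc n)) {0..1}"
    by (intro fundamental_theorem_of_calculus) (auto simp: has_real_derivative_iff_has_vector_derivative)
  thus ?thesis by simp
qed

lemma has_integral_dilate_unit_interval:
  fixes f :: "real \<Rightarrow> real"
  assumes "0 < z"
  shows "((\<lambda>r. f (z * r)) has_integral I) {0..1} \<longleftrightarrow> (f has_integral z * I) {0..z}"
  using has_integral_stretch_real_iff[of z f I 0 z] assms by simp

lemma moment_mean_eq:
  fixes h :: "real \<Rightarrow> real"
  assumes "0 < b" "(\<lambda>y. y ^ n * h y) integrable_on {0..b}"
  shows "integral {0..1} (\<lambda>r. r ^ n * h (b * r)) = integral {0..b} (\<lambda>y. y ^ n * h y) / b ^ Suc n"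
proof -
  define A where "A = integral {0..b} (\<lambda>y. y ^ n * h y)"
  have "((\<lambda>y. y ^ n * h y) has_integral b * (A / b)) {0..b}"
    using assms by (simp add: A_def integrable_integral)
  hence "((\<lambda>r. (b * r) ^ n * h (b * r)) has_integral A / b) {0..1}"
    using has_integral_dilate_unit_interval[OF assms(1), of "\<lambda>y. y ^ n * h y"] by simp
  hence "((\<lambda>r. r ^ n * h (b * r)) has_integral A / b / b ^ n) {0..1}"
    using has_integral_mult_right[of _ _ _ "1 / b ^ n"] assms(1)
    by (force simp: power_mult_distrib)
  thus ?thesis by (simp add: integral_unique A_def)
qed

lemma has_real_derivative_moment_average:
  fixes h :: "real \<Rightarrow> real"
  assumes "0 < z" "isCont h z" and int: "\<And>b. 0 < b \<Longrightarrow> (\<lambda>y. y ^ n * h y) integrable_on {0..b}"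
  shows "((\<lambda>z. integral {0..1} (\<lambda>r. r ^ n * h (z * r))) has_real_derivative
           (h z - real (Suc n) * integral {0..1} (\<lambda>r. r ^ n * h (z * r))) / z) (at z)"
proof -
  define A where "A = (\<lambda>b. integral {0..b} (\<lambda>y. y ^ n * h y))"
  have avg: "integral {0..1} (\<lambda>r. r ^ n * h (b * r)) = A b / b ^ Suc n" if "0 < b" for b
    unfolding A_def using that int[OF that] by (rule moment_mean_eq)
  have "isCont (\<lambda>y. y ^ n * h y) z"
    using assms(2) by (intro continuous_intros)
  hence "continuous (at z within {0..z + 1} - {}) (\<lambda>y. y ^ n * h y)"
    by (rule continuous_at_imp_continuous_within)
  moreover have "(\<lambda>y. y ^ n * h y) integrable_on {0..z + 1}"
    using assms(1) by (intro int) simp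
  moreover have "z \<in> {0..z + 1} - {}"
    using assms(1) by simp
  ultimately have "((\<lambda>b. integral {0..b} (\<lambda>y. y ^ n * h y)) has_vector_derivative z ^ n * h z)
      (at z within {0..z + 1} - {})"
    by (intro integral_has_vector_derivative_continuous_at) simp_all
  moreover have "at z within {0..z + 1} - {} = at z"
    using assms by (intro at_within_interior) auto
  ultimately have dA: "(A has_real_derivative z ^ n * h z) (at z)"
    by (simp add: A_def has_real_derivative_iff_has_vector_derivative)
  have "((\<lambda>b. A b / b ^ Suc n) has_real_derivative
      (z ^ n * h z * z ^ Suc n - A z * (real (Suc n) * z ^ n)) / (z ^ Suc n * z ^ Suc n)) (at z)"
    using assms(1) by (auto intro!: derivative_eq_intros dA simp del: power_Suc)
  moreover have "(z ^ n * h z * z ^ Suc n - A z * (real (Suc n) * z ^ n)) / (z ^ Suc n * z ^ Suc n)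
      = (h z - real (Suc n) * (A z / z ^ Suc n)) / z"
    using assms(1) by (simp add: field_simps)
  ultimately have dQ: "((\<lambda>b. A b / b ^ Suc n) has_real_derivative
      (h z - real (Suc n) * integral {0..1} (\<lambda>r. r ^ n * h (z * r))) / z) (at z)"
    using avg[OF assms(1)] by simp
  show ?thesis
  proof (rule has_field_derivative_transform_within_open[OF dQ])
    show "open {0::real<..}" "z \<in> {0<..}" using assms(1) by simp_all
    show "A b / b ^ Suc n = integral {0..1} (\<lambda>r. r ^ n * h (b * r))" if "b \<in> {0<..}" for b
      using avg that by simp
  qed
qed

lemma moment_integral_bounds:
  fixes f :: "real \<Rightarrow> real"
  assumes "continuous_on {0..1} f" and "\<And>r. r \<in> {0..1} \<Longrightarrow> a \<le> f r \<and> f r \<le> b"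
  shows "a / real (Suc n) \<le> integral {0..1} (\<lambda>r. r ^ n * f r)"
    and "integral {0..1} (\<lambda>r. r ^ n * f r) \<le> b / real (Suc n)"
proof -
  have int: "(\<lambda>r. r ^ n * f r) integrable_on {0..1}"
    using assms(1) by (intro integrable_continuous_interval continuous_intros)
  have "((\<lambda>r. r ^ n * c) has_integral c / real (Suc n)) {0..1}" for c :: real
    using has_integral_mult_left[OF has_integral_power_unit_interval[of n], of c] by simp
  thus "a / real (Suc n) \<le> integral {0..1} (\<lambda>r. r ^ n * f r)"
       "integral {0..1} (\<lambda>r. r ^ n * f r) \<le> b / real (Suc n)"
    using int assms(2)
    by (auto intro!: has_integral_le[OF _ integrable_integral] has_integral_le[OF integrable_integral]
             mult_left_mono)
qed

lemma has_integral_if_antiderivative_tendsto_0: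
  fixes f \<Phi> :: "real \<Rightarrow> real"
  assumes "0 < z" and deriv: "\<And>x. 0 < x \<Longrightarrow> (\<Phi> has_real_derivative f x) (at x)"
    and lim: "(\<Phi> \<longlongrightarrow> 0) (at_right 0)"
  shows "(f has_integral \<Phi> z) {0..z}"
proof -
  define \<Psi> where "\<Psi> x = (if x \<le> 0 then 0 else \<Phi> x)" for x
  have d\<Psi>: "(\<Psi> has_real_derivative f x) (at x)" if "0 < x" for x
  proof (rule has_field_derivative_transform_within_open[OF deriv[OF that]])
    show "open {0::real<..}" "x \<in> {0<..}" using that by simp_all
  qed (simp add: \<Psi>_def)
  have "\<forall>\<^sub>F x in at_right 0. \<Phi> x = \<Psi> x"
    using eventually_at_right_less[of 0] by eventually_elim (simp add: \<Psi>_def)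
  with lim have "(\<Psi> \<longlongrightarrow> \<Psi> 0) (at 0 within {0..z})"
    using assms(1) by (simp add: at_within_Icc_at_right \<Psi>_def Lim_transform_eventually)
  hence "continuous (at x within {0..z}) \<Psi>" if "x \<in> {0..z}" for x
    using that d\<Psi>[THEN DERIV_isCont, THEN continuous_at_imp_continuous_within, of x]
    by (cases "x = 0") (auto simp: continuous_within)
  hence "(f has_integral \<Psi> z - \<Psi> 0) {0..z}"
    using assms(1) d\<Psi>
    by (intro fundamental_theorem_of_calculus_interior)
       (auto simp: continuous_on_eq_continuous_within has_real_derivative_iff_has_vector_derivative[symmetric])
  thus ?thesis using assms(1) by (simp add: \<Psi>_def)
qed

lemma tendsto_at_top_if_antimono_bdd_below:
  fixes h :: "real \<Rightarrow> real"
  assumes mono: "\<And>s t. 0 \<le> s \<Longrightarrow> s \<le> t \<Longrightarrow> h t \<le> h s" and bdd: "\<And>t. 0 \<le> t \<Longrightarrow> B \<le> h t"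
  shows "\<exists>L. (h \<longlongrightarrow> L) at_top"
proof
  have bdd': "bdd_below (h ` {0..})"
    using bdd by (auto intro!: bdd_belowI[where m = B])
  show "(h \<longlongrightarrow> Inf (h ` {0..})) at_top"
  proof (rule decreasing_tendsto)
    show "\<forall>\<^sub>F t in at_top. Inf (h ` {0..}) \<le> h t"
      using eventually_ge_at_top[of 0] by eventually_elim (use bdd' in \<open>auto intro: cInf_lower\<close>)
  next
    fix x assume "Inf (h ` {0..}) < x"
    then obtain t\<^sub>0 where t\<^sub>0: "t\<^sub>0 \<ge> 0" "h t\<^sub>0 < x"
      by (subst (asm) cInf_less_iff) (use bdd' in auto)
    show "\<forall>\<^sub>F t in at_top. h t < x"
      using eventually_ge_at_top[of t\<^sub>0]
      by eventually_elim (use mono t\<^sub>0 in \<open>fastforce intro: le_less_trans\<close>)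
  qed
qed

text \<open>Both g + (C/\<gamma>) e^(-\<gamma> t) and g - (C/\<gamma>) e^(-\<gamma> t) are monotone, the first bounded
  below by the second.\<close>
lemma tendsto_at_top_if_deriv_exp_bounded:
  fixes g g' :: "real \<Rightarrow> real"
  assumes deriv: "\<And>t. 0 \<le> t \<Longrightarrow> (g has_real_derivative g' t) (at t)"
    and bound: "\<And>t. 0 \<le> t \<Longrightarrow> \<bar>g' t\<bar> \<le> C * exp (- \<gamma> * t)" and "0 < \<gamma>"
  shows "\<exists>L. (g \<longlongrightarrow> L) at_top"
proof -
  define e where "e t = C / \<gamma> * exp (- \<gamma> * t)" for t
  have de: "(e has_real_derivative - C * exp (- \<gamma> * t)) (at t)" for t
    unfolding e_def[abs_def] using \<open>0 < \<gamma>\<close> by (auto intro!: derivative_eq_intros)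
  have upper_antimono: "g t + e t \<le> g s + e s" if "0 \<le> s" "s \<le> t" for s t
  proof (rule DERIV_nonpos_imp_nonincreasing[OF that(2)])
    fix x assume "s \<le> x"
    hence "0 \<le> x" using that by simp
    thus "\<exists>d. ((\<lambda>t. g t + e t) has_real_derivative d) (at x) \<and> d \<le> 0"
      using DERIV_add[OF deriv de] bound by (force simp: abs_le_iff)
  qed
  have lower_mono: "g s - e s \<le> g t - e t" if "0 \<le> s" "s \<le> t" for s t
  proof (rule DERIV_nonneg_imp_nondecreasing[OF that(2)])
    fix x assume "s \<le> x"
    hence "0 \<le> x" using that by simp
    thus "\<exists>d. ((\<lambda>t. g t - e t) has_real_derivative d) (at x) \<and> 0 \<le> d"
      using DERIV_diff[OF deriv de] bound by (force simp: abs_le_iff)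
  qed
  have e_nonneg: "0 \<le> e t" for t
    using bound[of 0] \<open>0 < \<gamma>\<close> by (auto simp: e_def intro!: mult_nonneg_nonneg divide_nonneg_pos)
  have "g 0 - e 0 \<le> g t + e t" if "0 \<le> t" for t
    using lower_mono[OF order_refl that] e_nonneg[of t] by linarith
  then obtain L where "((\<lambda>t. g t + e t) \<longlongrightarrow> L) at_top"
    using tendsto_at_top_if_antimono_bdd_below[of "\<lambda>t. g t + e t"] upper_antimono by blast
  moreover have "(e \<longlongrightarrow> 0) at_top"
    unfolding e_def[abs_def] using \<open>0 < \<gamma>\<close> by real_asymp
  ultimately have "((\<lambda>t. (g t + e t) - e t) \<longlongrightarrow> L - 0) at_top"
    by (intro tendsto_diff)
  thus ?thesis by auto
qed

lemma tendsto_at_bot_if_deriv_exp_bounded: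
  fixes g g' :: "real \<Rightarrow> real"
  assumes deriv: "\<And>t. t \<le> 0 \<Longrightarrow> (g has_real_derivative g' t) (at t)"
    and bound: "\<And>t. t \<le> 0 \<Longrightarrow> \<bar>g' t\<bar> \<le> C * exp (\<gamma> * t)" and "0 < \<gamma>"
  shows "\<exists>L. (g \<longlongrightarrow> L) at_bot"
proof -
  have "\<exists>L. ((\<lambda>t. g (- t)) \<longlongrightarrow> L) at_top"
  proof (rule tendsto_at_top_if_deriv_exp_bounded[where g' = "\<lambda>t. - g' (- t)" and C = C])
    show "((\<lambda>t. g (- t)) has_real_derivative - g' (- t)) (at t)" if "0 \<le> t" for t
      using deriv[of "- t"] that by (simp add: DERIV_mirror)
    show "\<bar>- g' (- t)\<bar> \<le> C * exp (- \<gamma> * t)" if "0 \<le> t" for t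
      using bound[of "- t"] that by simp
  qed fact
  thus ?thesis by (simp add: filterlim_at_bot_mirror)
qed

lemma exp_weighted_antimono_if_deriv_le:
  fixes y y' :: "real \<Rightarrow> real"
  assumes deriv: "\<And>t. 0 \<le> t \<Longrightarrow> (y has_real_derivative y' t) (at t)"
    and ineq: "\<And>t. 0 \<le> t \<Longrightarrow> y' t \<le> - m * y t + exp (- t)"
    and nonneg: "\<And>t. 0 \<le> t \<Longrightarrow> 0 \<le> y t" and "\<gamma> < m" "\<gamma> < 1" and "0 \<le> t"
  shows "exp (\<gamma> * t) * y t + exp ((\<gamma> - 1) * t) / (1 - \<gamma>) \<le> y 0 + 1 / (1 - \<gamma>)"
proof -
  define k where "k = 1 / (1 - \<gamma>)"
  define \<psi> where "\<psi> t = exp (\<gamma> * t) * y t + exp ((\<gamma> - 1) * t) * k" for t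
  have "\<psi> t \<le> \<psi> 0"
  proof (rule DERIV_nonpos_imp_nonincreasing[OF \<open>0 \<le> t\<close>])
    fix x :: real assume x: "0 \<le> x"
    have "exp ((\<gamma> - 1) * x) = exp (\<gamma> * x) * exp (- x)"
      by (simp add: mult_exp_exp algebra_simps)
    hence "\<gamma> * exp (\<gamma> * x) * y x + exp (\<gamma> * x) * y' x - exp ((\<gamma> - 1) * x)
        \<le> (\<gamma> - m) * (exp (\<gamma> * x) * y x)"
      using mult_left_mono[OF ineq[OF x], of "exp (\<gamma> * x)"] by (simp add: algebra_simps)
    also have "\<dots> \<le> 0"
      using \<open>\<gamma> < m\<close> nonneg[OF x] by (intro mult_nonpos_nonneg) auto
    finally have neg: "\<gamma> * exp (\<gamma> * x) * y x + exp (\<gamma> * x) * y' x - exp ((\<gamma> - 1) * x) \<le> 0" .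
    have "((\<lambda>t. exp (\<gamma> * t) * y t) has_real_derivative
        \<gamma> * exp (\<gamma> * x) * y x + exp (\<gamma> * x) * y' x) (at x)"
      using deriv[OF x] by (auto intro!: derivative_eq_intros)
    moreover have "((\<lambda>t. exp ((\<gamma> - 1) * t) * k) has_real_derivative exp ((\<gamma> - 1) * x) * (\<gamma> - 1) * k)
        (at x)"
      by (auto intro!: derivative_eq_intros)
    moreover have "exp ((\<gamma> - 1) * x) * (\<gamma> - 1) * k = - exp ((\<gamma> - 1) * x)"
      using \<open>\<gamma> < 1\<close> by (simp add: k_def field_simps)
    ultimately have "(\<psi> has_real_derivative
        \<gamma> * exp (\<gamma> * x) * y x + exp (\<gamma> * x) * y' x - exp ((\<gamma> - 1) * x)) (at x)"
      unfolding \<psi>_def[abs_def] using DERIV_add by fastforce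
    with neg show "\<exists>d. (\<psi> has_real_derivative d) (at x) \<and> d \<le> 0" by blast
  qed
  thus ?thesis by (simp add: \<psi>_def k_def)
qed

lemma exp_decay_if_deriv_le:
  fixes y y' :: "real \<Rightarrow> real"
  assumes deriv: "\<And>t. 0 \<le> t \<Longrightarrow> (y has_real_derivative y' t) (at t)"
    and ineq: "\<And>t. 0 \<le> t \<Longrightarrow> y' t \<le> - m * y t + exp (- t)"
    and nonneg: "\<And>t. 0 \<le> t \<Longrightarrow> 0 \<le> y t" and "\<gamma> < m" "\<gamma> < 1"
  shows "\<exists>C. \<forall>t\<ge>0. y t \<le> C * exp (- \<gamma> * t)"
proof (intro exI allI impI)
  fix t :: real assume "0 \<le> t"
  have "0 \<le> exp ((\<gamma> - 1) * t) / (1 - \<gamma>)"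
    using \<open>\<gamma> < 1\<close> by simp
  hence weighted: "exp (\<gamma> * t) * y t \<le> y 0 + 1 / (1 - \<gamma>)"
    using exp_weighted_antimono_if_deriv_le[OF assms \<open>0 \<le> t\<close>] by linarith
  have "y t = exp (\<gamma> * t) * y t * exp (- \<gamma> * t)"
    by (simp add: exp_minus)
  also have "\<dots> \<le> (y 0 + 1 / (1 - \<gamma>)) * exp (- \<gamma> * t)"
    using weighted by (intro mult_right_mono) auto
  finally show "y t \<le> (y 0 + 1 / (1 - \<gamma>)) * exp (- \<gamma> * t)" .
qed

lemma exists_antiderivative_real:
  fixes f :: "real \<Rightarrow> real"
  assumes "continuous_on UNIV f"
  shows "\<exists>F. \<forall>x. (F has_real_derivative f x) (at x)"
proof -
  have "((\<lambda>x. interval_lebesgue_integral lborel (ereal 0) (ereal x) f) has_real_derivative f x) (at x)"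
    for x
  proof -
    have "((\<lambda>x. interval_lebesgue_integral lborel (ereal 0) (ereal x) f) has_vector_derivative f x)
        (at x within {min 0 x - 1..max 0 x + 1})"
      by (rule interval_integral_FTC2) (auto intro: continuous_on_subset[OF assms])
    moreover have "at x within {min 0 x - 1..max 0 x + 1} = at x"
      by (intro at_within_interior) auto
    ultimately show ?thesis by (simp add: has_real_derivative_iff_has_vector_derivative)
  qed
  thus ?thesis by blast
qed

lemma strict_mono_surj_if_deriv_ge_pos:
  fixes f f' :: "real \<Rightarrow> real"
  assumes deriv: "\<And>t. (f has_real_derivative f' t) (at t)" and ge: "\<And>t. c \<le> f' t" and "0 < c"
  shows "strict_mono f" "surj f"
proof -
  show "strict_mono f"
  proof (rule strict_monoI)
    fix a b :: real assume "a < b"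
    thus "f a < f b"
      by (rule DERIV_pos_imp_increasing) (use deriv ge \<open>0 < c\<close> in \<open>force intro: less_le_trans\<close>)
  qed
  have lin: "f a + c * (b - a) \<le> f b" if "a \<le> b" for a b
  proof -
    have "f a - c * a \<le> f b - c * b"
    proof (rule DERIV_nonneg_imp_nondecreasing[OF that])
      fix x
      have "((\<lambda>t. f t - c * t) has_real_derivative f' x - c) (at x)"
        using deriv by (auto intro!: derivative_eq_intros)
      thus "\<exists>d. ((\<lambda>t. f t - c * t) has_real_derivative d) (at x) \<and> 0 \<le> d"
        using ge[of x] by force
    qed
    thus ?thesis by (simp add: algebra_simps)
  qed
  have "\<exists>t. f t = y" for y
  proof -
    define d where "d = \<bar>y - f 0\<bar> / c"
    have "f (- d) \<le> y" "y \<le> f d" "- d \<le> d"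
      using lin[of "- d" 0] lin[of 0 d] \<open>0 < c\<close> by (auto simp: d_def abs_if)
    moreover have "continuous_on {- d..d} f"
      using deriv by (intro continuous_at_imp_continuous_on) (blast intro: DERIV_isCont)
    ultimately show ?thesis
      using IVT'[of f "- d" y d] by blast
  qed
  thus "surj f" by (metis surjI)
qed

lemma has_real_derivative_inv:
  fixes f f' :: "real \<Rightarrow> real"
  assumes "strict_mono f" "surj f" and deriv: "\<And>t. (f has_real_derivative f' t) (at t)"
    and "f' (inv f y) \<noteq> 0"
  shows "(inv f has_real_derivative inverse (f' (inv f y))) (at y)"
proof -
  have inv_f: "inv f (f t) = t" "f (inv f x) = x" for t x
    using assms(1,2) by (simp_all add: strict_mono_on_imp_inj_on inv_f_f surj_f_inv_f)
  have "isCont (inv f) (f (inv f y))"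
    by (rule isCont_inverse_function[where d = 1]) (auto simp: inv_f intro: DERIV_isCont[OF deriv])
  hence "isCont (inv f) y" by (simp add: inv_f)
  then show ?thesis
    by (intro DERIV_inverse_function[where f = f and g = "inv f" and x = y and a = "y - 1" and b = "y + 1",
          OF deriv[of "inv f y"] assms(4)])
       (simp_all add: inv_f)
qed

lemma filterlim_inv_if_strict_mono_surj:
  fixes f :: "real \<Rightarrow> real"
  assumes "strict_mono f" "surj f"
  shows "filterlim (inv f) at_top at_top" "filterlim (inv f) at_bot at_bot"
proof -
  have inv_f: "inv f (f t) = t" for t
    using assms by (simp add: strict_mono_on_imp_inj_on inv_f_f)
  have mono: "strict_mono (inv f)"
    using assms inv_f by (rule strict_mono_inv)
  show "filterlim (inv f) at_top at_top"
    unfolding filterlim_at_top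
  proof
    fix Z
    show "\<forall>\<^sub>F y in at_top. Z \<le> inv f y"
      using eventually_ge_at_top[of "f Z"]
      by eventually_elim (use mono inv_f in \<open>metis strict_mono_leD\<close>)
  qed
  show "filterlim (inv f) at_bot at_bot"
    unfolding filterlim_at_bot
  proof
    fix Z
    show "\<forall>\<^sub>F y in at_bot. inv f y \<le> Z"
      using eventually_le_at_bot[of "f Z"]
      by eventually_elim (use mono inv_f in \<open>metis strict_mono_leD\<close>)
  qed
qed

lemma profile_has_derivative:
  "is_profile \<beta> v \<Longrightarrow> 0 < z \<Longrightarrow> (v has_real_derivative deriv v z) (at z)"
  unfolding is_profile_def using DERIV_deriv_iff_real_differentiable by blast

lemma profile_between_0_1:
  assumes "is_profile \<beta> v" "0 < z"
  shows "0 < v z \<and> v z < 1"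
proof -
  have mono: "strict_mono_on {0<..} v" and lim: "(v \<longlongrightarrow> 1) at_top"
    using assms(1) unfolding is_profile_def by auto
  have "\<forall>\<^sub>F y in at_top. v (z + 1) \<le> v y"
    using eventually_ge_at_top[of "z + 1"]
    by eventually_elim (use assms(2) in \<open>auto intro: strict_mono_on_leD[OF mono]\<close>)
  hence "v (z + 1) \<le> 1"
    by (intro tendsto_lowerbound[OF lim]) simp_all
  moreover have "v z < v (z + 1)"
    using assms(2) by (intro strict_mono_onD[OF mono]) auto
  ultimately show ?thesis
    using assms unfolding is_profile_def by auto
qed

lemma profile_mean_has_derivative:
  assumes "is_profile \<beta> v" "0 < z"
  shows "((\<lambda>z. integral {0..1} (\<lambda>r. v (z * r))) has_real_derivative
           (v z - integral {0..1} (\<lambda>r. v (z * r))) / z) (at z)"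
proof -
  have "(\<lambda>y. y ^ 0 * v y) integrable_on {0..b}" if "0 < b" for b
  proof -
    have "(\<lambda>r. v (b * r)) integrable_on {0..1}"
      using assms(1) that unfolding is_profile_def by blast
    thus ?thesis
      using has_integral_dilate_unit_interval[OF that] by (auto simp: integrable_on_def)
  qed
  moreover have "isCont v z"
    using profile_has_derivative[OF assms] by (rule DERIV_isCont)
  ultimately show ?thesis
    using has_real_derivative_moment_average[of z v 0] assms(2) by simp
qed

lemma profile_mean_bounds:
  assumes "is_profile \<beta> v" "0 < z"
  shows "0 \<le> integral {0..1} (\<lambda>r. v (z * r))" "integral {0..1} (\<lambda>r. v (z * r)) \<le> v z"
proof -
  have pos: "\<And>y. 0 < y \<Longrightarrow> 0 < v y" and mono: "strict_mono_on {0<..} v"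
    and int: "(\<lambda>r. v (z * r)) integrable_on {0..1}"
    using assms unfolding is_profile_def by auto
  \<comment> \<open>nothing is known about v 0, so the integrand is redefined at r = 0\<close>
  define g where "g r = (if r = 0 then v z else v (z * r))" for r
  have "(g has_integral integral {0..1} (\<lambda>r. v (z * r))) {0..1}"
    by (rule has_integral_spike[OF negligible_sing[of 0] _ integrable_integral[OF int]]) (auto simp: g_def)
  moreover have "0 \<le> g r \<and> g r \<le> v z" if "r \<in> {0..1}" for r
    using that assms(2) pos[of z] pos[of "z * r"] strict_mono_on_leD[OF mono, of "z * r" z]
    by (auto simp: g_def mult_le_cancel_left1 less_le)
  ultimately show "0 \<le> integral {0..1} (\<lambda>r. v (z * r))" "integral {0..1} (\<lambda>r. v (z * r)) \<le> v z"
    using has_integral_le[of "\<lambda>_. 0" 0 "{0..1::real}" g] has_integral_le[of g _ "{0..1::real}" "\<lambda>_. v z" "v z"]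
      has_integral_const_real[of "v z" 0 1]
    by auto
qed

section \<open>A connecting orbit of the reduced equation\<close>

locale profile_exponents =
  fixes \<beta> \<alpha> \<alpha>h :: real
  assumes alpha_pos: "0 < \<alpha>" and alpha_less_one: "\<alpha> < 1"
    and beta_alpha: "\<beta> = (1 - \<alpha>) / (\<alpha> * (1 + \<alpha>))"
    and alphah_pos: "0 < \<alpha>h" and alphah_less: "\<alpha>h < 1/3"
    and beta_alphah: "\<beta> = (1 - 3 * \<alpha>h) / (\<alpha>h * (1 - \<alpha>h))"
begin

definition s0 :: real where "s0 = (1 - \<alpha> * \<beta>) / 2"
definition s1 :: real where "s1 = (1 - \<alpha>h * \<beta>) / 2"

text \<open>Right-hand side of the reduced equation s' = F (logistic t) s; its equilibria for
  logistic t = 0 and logistic t = 1 are s0 and s1.\<close>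
definition F :: "real \<Rightarrow> real \<Rightarrow> real" where
  "F p s = 1 - (1 - 2 * p) * s - \<beta> * s / (1 - 2 * s)"

definition slope_lo :: real where "slope_lo = \<beta> / (\<alpha> * \<beta>)\<^sup>2 - 1"
definition slope_hi :: real where "slope_hi = 1 + \<beta> / (\<alpha>h * \<beta>)\<^sup>2"

lemma beta_pos: "0 < \<beta>"
  using alpha_pos alpha_less_one by (simp add: beta_alpha)

lemma beta_alpha_eq: "\<beta> * \<alpha> * (1 + \<alpha>) = 1 - \<alpha>"
  using alpha_pos by (simp add: beta_alpha)

lemma beta_alphah_eq: "\<beta> * \<alpha>h * (1 - \<alpha>h) = 1 - 3 * \<alpha>h"
  using alphah_pos alphah_less by (simp add: beta_alphah)

text \<open>(1 - a) / (a (1 + a)) is decreasing in a and exceeds \<beta> at a = \<alpha>h.\<close>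
lemma alphah_less_alpha: "\<alpha>h < \<alpha>"
proof (rule ccontr)
  assume "\<not> \<alpha>h < \<alpha>"
  hence "\<beta> * \<alpha> * (1 + \<alpha>) \<le> \<beta> * \<alpha>h * (1 + \<alpha>h)"
    using alpha_pos beta_pos by (intro mult_mono mult_left_mono) auto
  hence "(1 - \<alpha>h) * (1 - \<alpha>h) \<le> (\<beta> * \<alpha>h * (1 + \<alpha>h)) * (1 - \<alpha>h)"
    using \<open>\<not> \<alpha>h < \<alpha>\<close> alphah_less beta_alpha_eq by (intro mult_right_mono) auto
  also have "\<dots> = (\<beta> * \<alpha>h * (1 - \<alpha>h)) * (1 + \<alpha>h)"
    by (simp add: algebra_simps)
  also have "\<dots> = (1 - 3 * \<alpha>h) * (1 + \<alpha>h)"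
    by (simp only: beta_alphah_eq)
  finally have "(1 - \<alpha>h) * (1 - \<alpha>h) \<le> (1 - 3 * \<alpha>h) * (1 + \<alpha>h)" .
  moreover have "0 < \<alpha>h * \<alpha>h"
    using alphah_pos by simp
  ultimately show False
    by (simp add: algebra_simps)
qed

lemma equilibria: "0 < s0" "s0 < s1" "s1 < 1/2" "1 - 2 * s0 = \<alpha> * \<beta>" "1 - 2 * s1 = \<alpha>h * \<beta>"
proof -
  have "\<alpha> * \<beta> * (1 + \<alpha>) < 1 * (1 + \<alpha>)"
    using beta_alpha_eq alpha_pos by (simp add: algebra_simps)
  hence "\<alpha> * \<beta> < 1"
    using alpha_pos by (simp add: mult_less_cancel_right)
  thus "0 < s0" by (simp add: s0_def)
  show "s0 < s1" using alphah_less_alpha beta_pos by (simp add: s0_def s1_def)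
  show "s1 < 1/2" using alphah_pos beta_pos by (simp add: s1_def)
qed (simp_all add: s0_def s1_def field_simps)

lemma alpha_beta_sq_less_beta: "(\<alpha> * \<beta>)\<^sup>2 < \<beta>"
proof -
  have "\<alpha> * \<beta> < 1"
    using equilibria by linarith
  hence "\<alpha> * (\<alpha> * \<beta>) < 1 * 1"
    using alpha_less_one alpha_pos beta_pos by (intro mult_strict_mono) auto
  thus ?thesis using beta_pos by (simp add: power2_eq_square)
qed

lemma F_s0: "F 0 s0 = 0"
proof -
  have "\<beta> * s0 / (1 - 2 * s0) = s0 / \<alpha>"
    using equilibria(4) beta_pos alpha_pos by simp
  moreover have "\<alpha> * \<beta> + \<alpha> * \<alpha> * \<beta> = 1 - \<alpha>"
    using beta_alpha_eq by (simp add: algebra_simps)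
  hence "s0 * (1 + \<alpha>) = \<alpha>"
    unfolding s0_def by (simp add: algebra_simps)
  hence "s0 / \<alpha> = 1 - s0"
    using alpha_pos by (simp add: field_simps)
  ultimately show ?thesis
    unfolding F_def by simp
qed

lemma F_s1: "F 1 s1 = 0"
proof -
  have "\<beta> * s1 / (1 - 2 * s1) = s1 / \<alpha>h"
    using equilibria(5) beta_pos alphah_pos by simp
  moreover have "\<alpha>h * \<beta> - \<alpha>h * \<alpha>h * \<beta> = 1 - 3 * \<alpha>h"
    using beta_alphah_eq by (simp add: algebra_simps)
  hence "s1 * (1 - \<alpha>h) = \<alpha>h"
    unfolding s1_def by (simp add: algebra_simps)
  hence "s1 / \<alpha>h = 1 + s1"
    using alphah_pos by (simp add: field_simps)
  ultimately show ?thesis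
    unfolding F_def by simp
qed

lemma F_affine: "F p s = F 0 s + 2 * p * s" "F p s = F 1 s - 2 * (1 - p) * s"
  unfolding F_def by (simp_all add: algebra_simps)

lemma slope_lo_pos: "0 < slope_lo"
  using alpha_beta_sq_less_beta alpha_pos beta_pos by (simp add: slope_lo_def less_divide_eq)

lemma slope_hi_gt_one: "1 < slope_hi"
  using beta_pos alphah_pos by (simp add: slope_hi_def)

lemma slope_lo_less_hi: "slope_lo < slope_hi"
proof -
  have "(\<alpha>h * \<beta>)\<^sup>2 < (\<alpha> * \<beta>)\<^sup>2"
    using alphah_less_alpha alphah_pos beta_pos by (intro power_strict_mono) auto
  hence "\<beta> / (\<alpha> * \<beta>)\<^sup>2 < \<beta> / (\<alpha>h * \<beta>)\<^sup>2"
    using beta_pos alphah_pos alpha_pos by (intro divide_strict_left_mono) auto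
  thus ?thesis unfolding slope_lo_def slope_hi_def by simp
qed

lemma F_decrease_bounds:
  assumes "s0 \<le> a" "a \<le> b" "b \<le> s1" "0 \<le> p" "p \<le> 1"
  shows "slope_lo * (b - a) \<le> F p a - F p b" "F p a - F p b \<le> slope_hi * (b - a)"
proof -
  define c where "c = (1 - 2 * p) + \<beta> / ((1 - 2 * a) * (1 - 2 * b))"
  have x: "\<alpha>h * \<beta> \<le> 1 - 2 * a" "1 - 2 * a \<le> \<alpha> * \<beta>" "\<alpha>h * \<beta> \<le> 1 - 2 * b" "1 - 2 * b \<le> \<alpha> * \<beta>"
    using assms equilibria by linarith+
  have pos: "0 < \<alpha>h * \<beta>" using alphah_pos beta_pos by simp
  have "1 - 2 * a \<noteq> 0" "1 - 2 * b \<noteq> 0"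
    using x pos by linarith+
  hence "b / (1 - 2 * b) - a / (1 - 2 * a) = (b - a) / ((1 - 2 * a) * (1 - 2 * b))"
    by (simp add: field_simps)
  moreover have "F p a - F p b = (1 - 2 * p) * (b - a) + \<beta> * (b / (1 - 2 * b) - a / (1 - 2 * a))"
    unfolding F_def by (simp add: algebra_simps)
  ultimately have "F p a - F p b = c * (b - a)"
    unfolding c_def by (simp add: algebra_simps)
  moreover have "(1 - 2 * a) * (1 - 2 * b) \<le> (\<alpha> * \<beta>)\<^sup>2" "(\<alpha>h * \<beta>)\<^sup>2 \<le> (1 - 2 * a) * (1 - 2 * b)"
    using x pos unfolding power2_eq_square by (intro mult_mono; linarith)+
  hence "\<beta> / (\<alpha> * \<beta>)\<^sup>2 \<le> \<beta> / ((1 - 2 * a) * (1 - 2 * b))"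
        "\<beta> / ((1 - 2 * a) * (1 - 2 * b)) \<le> \<beta> / (\<alpha>h * \<beta>)\<^sup>2"
    using x pos beta_pos by (auto intro!: divide_left_mono mult_pos_pos)
  hence "slope_lo \<le> c" "c \<le> slope_hi"
    using assms unfolding c_def slope_lo_def slope_hi_def by linarith+
  hence "slope_lo * (b - a) \<le> c * (b - a)" "c * (b - a) \<le> slope_hi * (b - a)"
    using assms by (simp_all add: mult_right_mono)
  ultimately show "slope_lo * (b - a) \<le> F p a - F p b" "F p a - F p b \<le> slope_hi * (b - a)"
    by simp_all
qed

lemma F_lower_near_s1:
  assumes "s0 \<le> a" "a \<le> s1" "0 \<le> p" "p \<le> 1"
  shows "slope_lo * (s1 - a) - (1 - p) \<le> F p a"
proof -
  have "slope_lo * (s1 - a) \<le> F 1 a"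
    using F_decrease_bounds(1)[of a s1 1] F_s1 assms equilibria by simp
  moreover have "2 * (1 - p) * a \<le> 1 - p"
    using assms equilibria mult_left_mono[of "2 * a" 1 "1 - p"] by (simp add: mult_ac)
  ultimately show ?thesis using F_affine(2)[of p a] by linarith
qed


definition N :: nat where "N = nat \<lceil>slope_hi\<rceil>"

lemma N_bounds: "slope_hi \<le> real N" "2 \<le> N" "slope_lo < real N"
proof -
  show "slope_hi \<le> real N" unfolding N_def by linarith
  have "2 \<le> \<lceil>slope_hi\<rceil>" using slope_hi_gt_one by linarith
  thus "2 \<le> N" unfolding N_def by linarith
  show "slope_lo < real N" using slope_lo_less_hi \<open>slope_hi \<le> real N\<close> by linarith
qed

text \<open>With S(y) = s(ln y) the orbit equation reads y S' = F (y / (1 + y)) S, i.e.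
  (y^N S)' = y^(N-1) G y S; adding N s makes G increasing in s.\<close>
definition G :: "real \<Rightarrow> real \<Rightarrow> real" where
  "G y a = F (\<bar>y\<bar> / (1 + \<bar>y\<bar>)) a + real N * a"

lemma G_mono_lipschitz:
  assumes "s0 \<le> a" "a \<le> b" "b \<le> s1"
  shows "0 \<le> G y b - G y a" "G y b - G y a \<le> (real N - slope_lo) * (b - a)"
proof -
  define p where "p = \<bar>y\<bar> / (1 + \<bar>y\<bar>)"
  have "0 \<le> p" "p \<le> 1" unfolding p_def by auto
  note F_bounds = F_decrease_bounds[OF assms this]
  have diff: "G y b - G y a = real N * (b - a) - (F p a - F p b)"
    unfolding G_def p_def by (simp add: algebra_simps)
  have "0 \<le> (real N - slope_hi) * (b - a)"
    using N_bounds assms by simp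
  thus "0 \<le> G y b - G y a"
    using diff F_bounds by (simp add: algebra_simps)
  show "G y b - G y a \<le> (real N - slope_lo) * (b - a)"
    using diff F_bounds by (simp add: algebra_simps)
qed

lemma G_lipschitz:
  assumes "s0 \<le> a" "a \<le> s1" "s0 \<le> b" "b \<le> s1"
  shows "\<bar>G y a - G y b\<bar> \<le> (real N - slope_lo) * \<bar>a - b\<bar>"
  using G_mono_lipschitz[of a b y] G_mono_lipschitz[of b a y] assms
  by (cases "a \<le> b") (auto simp: abs_if)

lemma G_bounds:
  assumes "s0 \<le> a" "a \<le> s1"
  shows "real N * s0 \<le> G y a" "G y a \<le> real N * s1"
    and "G y a - real N * s0 \<le> (real N - slope_lo) * (a - s0) + \<bar>y\<bar> / (1 + \<bar>y\<bar>)"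
proof -
  define p where "p = \<bar>y\<bar> / (1 + \<bar>y\<bar>)"
  have p: "0 \<le> p" "p \<le> 1" unfolding p_def by auto
  have G_s0: "G y s0 = 2 * p * s0 + real N * s0"
    using F_affine(1)[of p s0] F_s0 unfolding G_def p_def by simp
  have G_s1: "G y s1 = real N * s1 - 2 * (1 - p) * s1"
    using F_affine(2)[of p s1] F_s1 unfolding G_def p_def by simp
  have "2 * p * s0 \<le> p"
    using p equilibria mult_left_mono[of "2 * s0" 1 p] by (simp add: mult_ac)
  moreover have "0 \<le> 2 * p * s0" "0 \<le> 2 * (1 - p) * s1"
    using p equilibria by simp_all
  moreover note G_mono_lipschitz[of s0 a y] G_mono_lipschitz[of a s1 y]
  ultimately show "real N * s0 \<le> G y a" "G y a \<le> real N * s1"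
    and "G y a - real N * s0 \<le> (real N - slope_lo) * (a - s0) + \<bar>y\<bar> / (1 + \<bar>y\<bar>)"
    using assms G_s0 G_s1 equilibria unfolding p_def by linarith+
qed

lemma continuous_on_G:
  assumes "continuous_on U a" "continuous_on U b" "\<And>x. x \<in> U \<Longrightarrow> b x \<le> s1"
  shows "continuous_on U (\<lambda>x. G (a x) (b x))"
proof -
  have "1 - 2 * b x \<noteq> 0" if "x \<in> U" for x
    using assms(3)[OF that] equilibria by linarith
  moreover have "1 + \<bar>a x\<bar> \<noteq> 0" for x
    using abs_ge_zero[of "a x"] by linarith
  ultimately show ?thesis
    unfolding G_def F_def by (intro continuous_intros assms) auto
qed

text \<open>Functions of y > 0 are extended evenly to the whole line, so that the bounded continuous
  functions on the reals serve as the complete metric space. The upper bound near y = 0 makes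
  the orbit leave s0 at rate e^t.\<close>
definition trap :: "(real \<Rightarrow>\<^sub>C real) set" where
  "trap = PiC UNIV (\<lambda>y. {s0 .. min s1 (s0 + \<bar>y\<bar> / (1 + \<bar>y\<bar>) / slope_lo)})"

definition integral_op :: "(real \<Rightarrow> real) \<Rightarrow> real \<Rightarrow> real" where
  "integral_op S Y = integral {0..1} (\<lambda>r. r ^ (N - 1) * G (\<bar>Y\<bar> * r) (S (\<bar>Y\<bar> * r)))"

definition \<Phi> :: "(real \<Rightarrow>\<^sub>C real) \<Rightarrow> (real \<Rightarrow>\<^sub>C real)" where
  "\<Phi> S = Bcontfun (integral_op (apply_bcontfun S))"

lemma trap_bounds:
  assumes "S \<in> trap"
  shows "s0 \<le> S y" "S y \<le> s1" "S y \<le> s0 + \<bar>y\<bar> / (1 + \<bar>y\<bar>) / slope_lo"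
  using mem_PiCD[OF assms[unfolded trap_def]] by auto

lemma Suc_N_minus_one: "Suc (N - 1) = N"
  using N_bounds by simp

lemma integral_op_integrand_continuous:
  assumes "S \<in> trap"
  shows "continuous_on {0..1} (\<lambda>r. G (\<bar>Y\<bar> * r) (S (\<bar>Y\<bar> * r)))"
  using trap_bounds[OF assms]
  by (intro continuous_on_G continuous_intros continuous_on_compose2[OF continuous_on_apply_bcontfun]) auto

lemma integral_op_continuous:
  assumes "S \<in> trap"
  shows "continuous_on UNIV (integral_op S)"
proof -
  have "continuous_on (UNIV \<times> {0..1})
      (\<lambda>x. snd x ^ (N - 1) * G (\<bar>fst x\<bar> * snd x) (S (\<bar>fst x\<bar> * snd x)))"
    using trap_bounds[OF assms]
    by (intro continuous_intros continuous_on_G continuous_on_compose2[OF continuous_on_apply_bcontfun]) auto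
  hence "continuous_on UNIV (\<lambda>Y. integral (cbox 0 1) (\<lambda>r. r ^ (N - 1) * G (\<bar>Y\<bar> * r) (S (\<bar>Y\<bar> * r))))"
    by (intro integral_continuous_on_param) (simp add: case_prod_beta)
  thus ?thesis unfolding integral_op_def[abs_def] by simp
qed

lemma G_le_in_trap:
  assumes "S \<in> trap"
  shows "G y (S y) \<le> real N * (s0 + \<bar>y\<bar> / (1 + \<bar>y\<bar>) / slope_lo)"
proof -
  note S = trap_bounds[OF assms]
  have "G y (S y) - real N * s0 \<le> (real N - slope_lo) * (S y - s0) + \<bar>y\<bar> / (1 + \<bar>y\<bar>)"
    using G_bounds(3) S by blast
  also have "\<dots> \<le> (real N - slope_lo) * (\<bar>y\<bar> / (1 + \<bar>y\<bar>) / slope_lo) + \<bar>y\<bar> / (1 + \<bar>y\<bar>)"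
    using S N_bounds slope_lo_pos
    by (intro add_right_mono mult_left_mono) (auto simp: algebra_simps)
  also have "\<dots> = real N * (\<bar>y\<bar> / (1 + \<bar>y\<bar>) / slope_lo)"
    using slope_lo_pos by (simp add: divide_simps) (simp add: algebra_simps)
  finally show ?thesis by (simp add: algebra_simps)
qed

lemma integral_op_bounds:
  assumes "S \<in> trap"
  shows "s0 \<le> integral_op S Y" "integral_op S Y \<le> s1"
    and "integral_op S Y \<le> s0 + \<bar>Y\<bar> / (1 + \<bar>Y\<bar>) / slope_lo"
proof -
  have mono: "\<bar>y\<bar> / (1 + \<bar>y\<bar>) \<le> \<bar>Y\<bar> / (1 + \<bar>Y\<bar>)" if "\<bar>y\<bar> \<le> \<bar>Y\<bar>" for y
    using that by (simp add: frac_le divide_le_cancel field_simps)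
  have "\<bar>\<bar>Y\<bar> * r\<bar> \<le> \<bar>Y\<bar>" if "r \<in> {0..1}" for r
    using that by (auto simp: abs_mult mult_left_le)
  hence "G (\<bar>Y\<bar> * r) (S (\<bar>Y\<bar> * r)) \<le> real N * (s0 + \<bar>Y\<bar> / (1 + \<bar>Y\<bar>) / slope_lo)"
    if "r \<in> {0..1}" for r
    using that mono slope_lo_pos G_le_in_trap[OF assms]
    by (meson add_left_mono divide_right_mono less_imp_le mult_left_mono of_nat_0_le_iff order_trans)
  moreover have "real N * s0 \<le> G y (S y)" "G y (S y) \<le> real N * s1" for y
    using G_bounds trap_bounds[OF assms] by blast+
  ultimately have "real N * s0 \<le> G (\<bar>Y\<bar> * r) (S (\<bar>Y\<bar> * r)) \<and>
      G (\<bar>Y\<bar> * r) (S (\<bar>Y\<bar> * r)) \<le> real N * min s1 (s0 + \<bar>Y\<bar> / (1 + \<bar>Y\<bar>) / slope_lo)"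
    if "r \<in> {0..1}" for r
    using that by (simp add: min_mult_distrib_left)
  from moment_integral_bounds[OF integral_op_integrand_continuous[OF assms] this, where n = "N - 1"]
  have "real N * s0 / real N \<le> integral_op S Y"
    "integral_op S Y \<le> real N * min s1 (s0 + \<bar>Y\<bar> / (1 + \<bar>Y\<bar>) / slope_lo) / real N"
    unfolding integral_op_def Suc_N_minus_one by simp_all
  thus "s0 \<le> integral_op S Y" "integral_op S Y \<le> s1"
    and "integral_op S Y \<le> s0 + \<bar>Y\<bar> / (1 + \<bar>Y\<bar>) / slope_lo"
    using N_bounds by auto
qed

lemma apply_\<Phi>:
  assumes "S \<in> trap"
  shows "apply_bcontfun (\<Phi> S) = integral_op S"
proof -
  have "norm (integral_op S Y) \<le> 1" for Y
    using integral_op_bounds[OF assms, of Y] equilibria by (simp only: real_norm_def abs_le_iff) linarith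
  hence "integral_op S \<in> bcontfun"
    using integral_op_continuous[OF assms] by (intro bcontfun_normI[where b = 1])
  thus ?thesis unfolding \<Phi>_def by (simp add: Bcontfun_inverse)
qed

lemma \<Phi>_trap: "S \<in> trap \<Longrightarrow> \<Phi> S \<in> trap"
  using integral_op_bounds unfolding trap_def by (intro mem_PiCI) (auto simp: apply_\<Phi>[unfolded trap_def])

lemma \<Phi>_contraction:
  assumes "S \<in> trap" "T \<in> trap"
  shows "dist (\<Phi> S) (\<Phi> T) \<le> (1 - slope_lo / real N) * dist S T"
proof (rule dist_bound)
  fix Y
  define d where "d = (real N - slope_lo) * dist S T"
  define f where "f r = G (\<bar>Y\<bar> * r) (S (\<bar>Y\<bar> * r)) - G (\<bar>Y\<bar> * r) (T (\<bar>Y\<bar> * r))" for r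
  have "\<bar>f r\<bar> \<le> d" for r
  proof -
    have "\<bar>f r\<bar> \<le> (real N - slope_lo) * \<bar>S (\<bar>Y\<bar> * r) - T (\<bar>Y\<bar> * r)\<bar>"
      unfolding f_def using trap_bounds assms by (intro G_lipschitz) auto
    also have "\<dots> \<le> d"
      unfolding d_def using N_bounds dist_bounded[of S _ T]
      by (intro mult_left_mono) (auto simp: dist_real_def)
    finally show ?thesis .
  qed
  hence "- d \<le> f r \<and> f r \<le> d" for r
    by (metis abs_le_iff minus_le_iff)
  moreover have "continuous_on {0..1} f"
    unfolding f_def using integral_op_integrand_continuous assms by (intro continuous_on_diff)
  ultimately have "- d / real N \<le> integral {0..1} (\<lambda>r. r ^ (N - 1) * f r)"
        "integral {0..1} (\<lambda>r. r ^ (N - 1) * f r) \<le> d / real N"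
    using moment_integral_bounds[of f "- d" d "N - 1"] unfolding Suc_N_minus_one by auto
  moreover have "integral {0..1} (\<lambda>r. r ^ (N - 1) * f r) = \<Phi> S Y - \<Phi> T Y"
    using integral_op_integrand_continuous[OF assms(1)] integral_op_integrand_continuous[OF assms(2)]
    unfolding apply_\<Phi>[OF assms(1)] apply_\<Phi>[OF assms(2)] integral_op_def f_def
    by (subst integral_diff[symmetric])
       (auto simp: algebra_simps intro!: integrable_continuous_interval continuous_intros)
  moreover have "d / real N = (1 - slope_lo / real N) * dist S T"
    using N_bounds by (simp add: d_def field_simps)
  ultimately show "dist (\<Phi> S Y) (\<Phi> T Y) \<le> (1 - slope_lo / real N) * dist S T"
    by (simp add: dist_real_def abs_le_iff)
qed

lemma \<Phi>_fixpoint: "\<exists>S\<in>trap. \<Phi> S = S"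
proof -
  have "0 \<le> 1 - slope_lo / real N" "1 - slope_lo / real N < 1"
    using N_bounds slope_lo_pos by (auto simp: field_simps)
  moreover have "trap \<noteq> {}"
  proof -
    have "Bcontfun (\<lambda>_. s0) \<in> trap"
      unfolding trap_def using equilibria slope_lo_pos
      by (intro mem_PiCI) (auto simp: Bcontfun_inverse const_bcontfun)
    thus ?thesis by blast
  qed
  moreover have "complete trap"
    unfolding trap_def by (simp add: complete_eq_closed closed_PiC)
  ultimately show ?thesis
    using Banach_fix[of trap "1 - slope_lo / real N" \<Phi>] \<Phi>_trap \<Phi>_contraction by blast
qed


lemma fixpoint_has_derivative:
  assumes S: "S \<in> trap" "\<Phi> S = S" and "0 < z"
  shows "(S has_real_derivative F (z / (1 + z)) (S z) / z) (at z)"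
proof -
  define h where "h y = G y (S y)" for y
  have h_cont: "continuous_on UNIV h"
    unfolding h_def using trap_bounds[OF S(1)] by (intro continuous_on_G) auto
  have fixpoint: "apply_bcontfun S = integral_op (apply_bcontfun S)"
    using apply_\<Phi>[OF S(1)] S(2) by simp
  have S_eq: "S y = integral {0..1} (\<lambda>r. r ^ (N - 1) * h (y * r))" if "y \<in> {0<..}" for y
    using fun_cong[OF fixpoint, of y] that by (simp add: integral_op_def h_def)
  have "isCont h z"
    using h_cont by (simp add: continuous_on_eq_continuous_at)
  moreover have "(\<lambda>y. y ^ (N - 1) * h y) integrable_on {0..b}" for b
    by (intro integrable_continuous_interval continuous_intros continuous_on_subset[OF h_cont]) auto
  ultimately have "((\<lambda>z. integral {0..1} (\<lambda>r. r ^ (N - 1) * h (z * r))) has_real_derivative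
      (h z - real (Suc (N - 1)) * integral {0..1} (\<lambda>r. r ^ (N - 1) * h (z * r))) / z) (at z)"
    using \<open>0 < z\<close> by (intro has_real_derivative_moment_average)
  moreover have "h z - real (Suc (N - 1)) * S z = F (z / (1 + z)) (S z)"
    using \<open>0 < z\<close> unfolding Suc_N_minus_one h_def G_def by simp
  ultimately have "((\<lambda>z. integral {0..1} (\<lambda>r. r ^ (N - 1) * h (z * r))) has_real_derivative
      F (z / (1 + z)) (S z) / z) (at z)"
    using S_eq[of z] \<open>0 < z\<close> by simp
  thus ?thesis
  proof (rule has_field_derivative_transform_within_open)
    show "open {0::real<..}" "z \<in> {0<..}" using \<open>0 < z\<close> by simp_all
  qed (simp add: S_eq)
qed

lemma connecting_orbit_exists:
  "\<exists>s. (\<forall>t. (s has_real_derivative F (logistic t) (s t)) (at t))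
     \<and> (\<forall>t. s0 \<le> s t \<and> s t \<le> s1 \<and> s t - s0 \<le> exp t / slope_lo)"
proof -
  obtain S where S: "S \<in> trap" "\<Phi> S = S"
    using \<Phi>_fixpoint by blast
  define s where "s t = S (exp t)" for t
  have "(s has_real_derivative F (logistic t) (s t)) (at t)" for t
    using DERIV_chain2[OF fixpoint_has_derivative[OF S] DERIV_exp, of t]
    by (simp add: s_def[abs_def] logistic_def)
  moreover have "s t - s0 \<le> exp t / slope_lo" for t
  proof -
    have "exp t / (1 + exp t) / slope_lo \<le> exp t / slope_lo"
      using divide_right_mono[OF logistic_le_exp[of t]] slope_lo_pos unfolding logistic_def by simp
    thus ?thesis
      using trap_bounds(3)[OF S(1), of "exp t"] unfolding s_def by simp
  qed
  moreover have "s0 \<le> s t" "s t \<le> s1" for t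
    using trap_bounds[OF S(1)] unfolding s_def by auto
  ultimately show ?thesis by blast
qed

end

section \<open>Construction of the profile\<close>

locale connecting_orbit = profile_exponents +
  fixes s :: "real \<Rightarrow> real"
  assumes orbit_deriv: "\<And>t. (s has_real_derivative F (logistic t) (s t)) (at t)"
    and orbit_ge: "\<And>t. s0 \<le> s t" and orbit_le: "\<And>t. s t \<le> s1"
    and orbit_near_s0: "\<And>t. s t - s0 \<le> exp t / slope_lo"
begin

lemma orbit_continuous: "continuous_on U s"
  using orbit_deriv by (intro continuous_at_imp_continuous_on) (blast intro: DERIV_isCont)

lemma orbit_denominator: "\<alpha>h * \<beta> \<le> 1 - 2 * s t" "1 - 2 * s t \<le> \<alpha> * \<beta>" "0 < 1 - 2 * s t"
  using orbit_ge[of t] orbit_le[of t] equilibria alphah_pos beta_pos by (auto intro: mult_pos_pos)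

lemma orbit_near_s1: "\<exists>C. \<forall>t\<ge>0. s1 - s t \<le> C * exp (- (min slope_lo 1 / 2) * t)"
proof (rule exp_decay_if_deriv_le)
  show "((\<lambda>t. s1 - s t) has_real_derivative - F (logistic t) (s t)) (at t)" for t
    by (auto intro!: derivative_eq_intros orbit_deriv)
  show "- F (logistic t) (s t) \<le> - slope_lo * (s1 - s t) + exp (- t)" for t
    using F_lower_near_s1[OF orbit_ge orbit_le, of "logistic t" t] one_minus_logistic_le_exp[of t]
      logistic_pos[of t] logistic_less_one[of t]
    by simp
  show "0 \<le> s1 - s t" for t
    using orbit_le by simp
qed (use slope_lo_pos in auto)

text \<open>The change of variable ln z = \<theta> t; the normalisation at -\<infinity> fixes the dilation.\<close>
definition \<theta> :: "real \<Rightarrow> real" where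
  "\<theta> = (SOME \<theta>. (\<forall>t. (\<theta> has_real_derivative \<beta> / (1 - 2 * s t)) (at t))
              \<and> ((\<lambda>t. t - \<alpha> * \<theta> t) \<longlongrightarrow> 0) at_bot)"

lemma \<theta>_exists:
  "\<exists>\<theta>. (\<forall>t. (\<theta> has_real_derivative \<beta> / (1 - 2 * s t)) (at t))
       \<and> ((\<lambda>t. t - \<alpha> * \<theta> t) \<longlongrightarrow> 0) at_bot"
proof -
  have "continuous_on UNIV (\<lambda>t. \<beta> / (1 - 2 * s t))"
    using orbit_denominator by (intro continuous_intros orbit_continuous) (simp add: less_le)
  then obtain \<Theta> where \<Theta>: "\<And>t. (\<Theta> has_real_derivative \<beta> / (1 - 2 * s t)) (at t)"
    using exists_antiderivative_real by blast
  have "\<exists>L. ((\<lambda>t. t - \<alpha> * \<Theta> t) \<longlongrightarrow> L) at_bot"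
  proof (rule tendsto_at_bot_if_deriv_exp_bounded)
    show "((\<lambda>t. t - \<alpha> * \<Theta> t) has_real_derivative 1 - \<alpha> * (\<beta> / (1 - 2 * s t))) (at t)" for t
      by (auto intro!: derivative_eq_intros \<Theta>)
    show "\<bar>1 - \<alpha> * (\<beta> / (1 - 2 * s t))\<bar> \<le> 2 / (slope_lo * (\<alpha>h * \<beta>)) * exp (1 * t)" for t
    proof -
      have "1 - \<alpha> * (\<beta> / (1 - 2 * s t)) = - 2 * (s t - s0) / (1 - 2 * s t)"
        using orbit_denominator[of t] equilibria(4) by (simp add: field_simps)
      moreover have "2 * (s t - s0) / (1 - 2 * s t) \<le> 2 * (exp t / slope_lo) / (\<alpha>h * \<beta>)"
        using orbit_denominator[of t] orbit_ge[of t] orbit_near_s0[of t] alphah_pos beta_pos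
        by (intro frac_le) auto
      ultimately show ?thesis
        using orbit_denominator[of t] orbit_ge[of t] by (simp add: abs_if field_simps)
    qed
  qed simp
  then obtain L where "((\<lambda>t. t - \<alpha> * \<Theta> t) \<longlongrightarrow> L) at_bot" ..
  hence "((\<lambda>t. (t - \<alpha> * \<Theta> t) - L) \<longlongrightarrow> L - L) at_bot"
    by (intro tendsto_diff tendsto_const)
  moreover have "(t - \<alpha> * \<Theta> t) - L = t - \<alpha> * (\<Theta> t + L / \<alpha>)" for t
    using alpha_pos by (simp add: field_simps)
  ultimately show ?thesis
    using \<Theta> by (intro exI[of _ "\<lambda>t. \<Theta> t + L / \<alpha>"]) (auto intro!: derivative_eq_intros)
qed

lemma has_real_derivative_\<theta>: "(\<theta> has_real_derivative \<beta> / (1 - 2 * s t)) (at t)"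
  and \<theta>_at_bot: "((\<lambda>t. t - \<alpha> * \<theta> t) \<longlongrightarrow> 0) at_bot"
  using someI_ex[OF \<theta>_exists] unfolding \<theta>_def[symmetric] by auto

lemma \<theta>_at_top: "\<exists>L. ((\<lambda>t. t - \<alpha>h * \<theta> t) \<longlongrightarrow> L) at_top"
proof -
  define \<gamma> where "\<gamma> = min slope_lo 1 / 2"
  obtain C where C: "\<And>t. 0 \<le> t \<Longrightarrow> s1 - s t \<le> C * exp (- \<gamma> * t)"
    using orbit_near_s1 unfolding \<gamma>_def by blast
  show ?thesis
  proof (rule tendsto_at_top_if_deriv_exp_bounded)
    show "((\<lambda>t. t - \<alpha>h * \<theta> t) has_real_derivative 1 - \<alpha>h * (\<beta> / (1 - 2 * s t))) (at t)" for t
      by (auto intro!: derivative_eq_intros has_real_derivative_\<theta>)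
    show "\<bar>1 - \<alpha>h * (\<beta> / (1 - 2 * s t))\<bar> \<le> 2 * C / (\<alpha>h * \<beta>) * exp (- \<gamma> * t)" if "0 \<le> t" for t
    proof -
      have eq: "1 - \<alpha>h * (\<beta> / (1 - 2 * s t)) = 2 * (s1 - s t) / (1 - 2 * s t)"
        using orbit_denominator[of t] equilibria(5) by (simp add: field_simps)
      have "2 * (s1 - s t) / (1 - 2 * s t) \<le> 2 * (C * exp (- \<gamma> * t)) / (\<alpha>h * \<beta>)"
        using orbit_denominator[of t] orbit_le[of t] C[OF that] alphah_pos beta_pos
        by (intro frac_le) auto
      moreover have "0 \<le> 2 * (s1 - s t) / (1 - 2 * s t)"
        using orbit_denominator[of t] orbit_le[of t] by simp
      ultimately show ?thesis
        unfolding eq by (subst abs_of_nonneg) simp_all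
    qed
    show "0 < \<gamma>" using slope_lo_pos unfolding \<gamma>_def by simp
  qed
qed

lemma \<theta>_strict_mono: "strict_mono \<theta>" and \<theta>_surj: "surj \<theta>"
proof -
  have "\<beta> \<le> \<beta> / (1 - 2 * s t)" for t
    using orbit_denominator[of t] orbit_ge[of t] equilibria beta_pos by (simp add: le_divide_eq)
  thus "strict_mono \<theta>" "surj \<theta>"
    using strict_mono_surj_if_deriv_ge_pos[OF has_real_derivative_\<theta>] beta_pos by blast+
qed


definition \<tau> :: "real \<Rightarrow> real" where "\<tau> z = inv \<theta> (ln z)"

definition u :: "real \<Rightarrow> real" where "u z = logistic (\<tau> z)"

definition average :: "real \<Rightarrow> real" where
  "average t = logistic t - logistic t * (1 - logistic t) * s t"

lemma \<theta>_\<tau>: "0 < z \<Longrightarrow> \<theta> (\<tau> z) = ln z"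
  unfolding \<tau>_def by (simp add: surj_f_inv_f[OF \<theta>_surj])

lemma \<tau>_strict_mono: "0 < y \<Longrightarrow> y < z \<Longrightarrow> \<tau> y < \<tau> z"
proof -
  have "strict_mono (inv \<theta>)"
    using \<theta>_strict_mono \<theta>_surj by (rule strict_mono_inv) (simp add: \<theta>_strict_mono strict_mono_on_imp_inj_on)
  thus "0 < y \<Longrightarrow> y < z \<Longrightarrow> \<tau> y < \<tau> z"
    unfolding \<tau>_def by (auto elim: strict_monoD)
qed

lemma filterlim_\<tau>: "filterlim \<tau> at_bot (at_right 0)" "filterlim \<tau> at_top at_top"
  unfolding \<tau>_def[abs_def]
  using filterlim_compose[OF filterlim_inv_if_strict_mono_surj(2)[OF \<theta>_strict_mono \<theta>_surj] ln_at_0]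
    filterlim_compose[OF filterlim_inv_if_strict_mono_surj(1)[OF \<theta>_strict_mono \<theta>_surj] ln_at_top]
  by simp_all

lemma has_real_derivative_\<tau>:
  assumes "0 < z"
  shows "(\<tau> has_real_derivative (1 - 2 * s (\<tau> z)) / (\<beta> * z)) (at z)"
proof -
  have "\<beta> / (1 - 2 * s (inv \<theta> y)) \<noteq> 0" for y
    using orbit_denominator beta_pos by (metis divide_eq_0_iff less_irrefl)
  hence "(inv \<theta> has_real_derivative inverse (\<beta> / (1 - 2 * s (inv \<theta> y)))) (at y)" for y
    by (rule has_real_derivative_inv[OF \<theta>_strict_mono \<theta>_surj has_real_derivative_\<theta>])
  from DERIV_chain2[OF this DERIV_ln_divide[OF assms]] show ?thesis
    unfolding \<tau>_def[abs_def] by simp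
qed

lemma has_real_derivative_u:
  assumes "0 < z"
  shows "(u has_real_derivative
      logistic (\<tau> z) * (1 - logistic (\<tau> z)) * (1 - 2 * s (\<tau> z)) / (\<beta> * z)) (at z)"
  using DERIV_chain2[OF has_real_derivative_logistic has_real_derivative_\<tau>[OF assms]]
  unfolding u_def[abs_def] by simp

lemma has_real_derivative_average:
  "(average has_real_derivative logistic t * (1 - logistic t) * (\<beta> * s t / (1 - 2 * s t))) (at t)"
proof -
  have "(average has_real_derivative
      logistic t * (1 - logistic t) - ((logistic t * (1 - logistic t) * (1 - logistic t)
        - logistic t * (logistic t * (1 - logistic t))) * s t
      + logistic t * (1 - logistic t) * F (logistic t) (s t))) (at t)"
    unfolding average_def[abs_def]
    by (auto intro!: derivative_eq_intros has_real_derivative_logistic orbit_deriv)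
  thus ?thesis
    unfolding F_def by (simp add: algebra_simps)
qed

lemma average_bounds: "0 \<le> average t" "average t \<le> logistic t"
proof -
  have "0 \<le> (1 - logistic t) * s t" "(1 - logistic t) * s t \<le> 1"
    using logistic_pos[of t] logistic_less_one[of t] orbit_ge[of t] orbit_le[of t] equilibria
    by (auto intro: mult_le_one)
  moreover have "average t = logistic t * (1 - (1 - logistic t) * s t)"
    unfolding average_def by (simp add: algebra_simps)
  ultimately show "0 \<le> average t" "average t \<le> logistic t"
    using logistic_pos[of t] by (simp_all add: mult_le_cancel_left1)
qed

lemma has_integral_u:
  assumes "0 < z"
  shows "((\<lambda>r. u (z * r)) has_integral average (\<tau> z)) {0..1}"
proof -
  have "(u has_integral z * average (\<tau> z)) {0..z}"
  proof (rule has_integral_if_antiderivative_tendsto_0[OF assms])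
    fix x :: real assume "0 < x"
    have d: "((\<lambda>x. x * average (\<tau> x)) has_real_derivative
        1 * average (\<tau> x) + (logistic (\<tau> x) * (1 - logistic (\<tau> x)) * (\<beta> * s (\<tau> x) / (1 - 2 * s (\<tau> x)))
          * ((1 - 2 * s (\<tau> x)) / (\<beta> * x))) * x) (at x)"
      by (rule DERIV_mult[OF DERIV_ident DERIV_chain2[OF has_real_derivative_average
            has_real_derivative_\<tau>[OF \<open>0 < x\<close>]]])
    have "1 - 2 * s (\<tau> x) \<noteq> 0"
      using orbit_denominator(3) by (metis less_irrefl)
    hence "1 * average (\<tau> x) + (logistic (\<tau> x) * (1 - logistic (\<tau> x)) * (\<beta> * s (\<tau> x) / (1 - 2 * s (\<tau> x)))
          * ((1 - 2 * s (\<tau> x)) / (\<beta> * x))) * x = u x"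
      using \<open>0 < x\<close> beta_pos unfolding u_def average_def by (simp add: field_simps)
    with d show "((\<lambda>x. x * average (\<tau> x)) has_real_derivative u x) (at x)"
      by (rule DERIV_cong)
  next
    have "\<bar>x * average (\<tau> x)\<bar> \<le> \<bar>x\<bar>" for x
      using average_bounds[of "\<tau> x"] logistic_less_one[of "\<tau> x"]
      by (simp add: abs_mult mult_left_le)
    hence "\<forall>\<^sub>F x in at_right 0. norm (x * average (\<tau> x)) \<le> \<bar>x\<bar>"
      by (intro always_eventually allI) simp
    moreover have "((\<lambda>x::real. \<bar>x\<bar>) \<longlongrightarrow> 0) (at_right 0)"
      by (rule tendsto_eq_intros tendsto_ident_at | simp)+
    ultimately show "((\<lambda>x. x * average (\<tau> x)) \<longlongrightarrow> 0) (at_right 0)"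
      by (rule Lim_null_comparison)
  qed
  thus ?thesis
    using has_integral_dilate_unit_interval[OF assms] by simp
qed

lemma u_is_profile: "is_profile \<beta> u"
  unfolding is_profile_def
proof (intro conjI allI impI)
  fix z :: real assume z: "0 < z"
  show "u differentiable at z"
    using has_real_derivative_u[OF z] real_differentiable_def by blast
  show "(\<lambda>r. u (z * r)) integrable_on {0..1}"
    using has_integral_u[OF z] by blast
  have "1 - 2 * s (\<tau> z) \<noteq> 0"
    using orbit_denominator(3) by (metis less_irrefl)
  thus "\<beta> * z * deriv u z + (u z)\<^sup>2 + u z = 2 * integral {0..1} (\<lambda>r. u (z * r))"
    using z beta_pos
    unfolding DERIV_imp_deriv[OF has_real_derivative_u[OF z]] integral_unique[OF has_integral_u[OF z]]
    unfolding u_def average_def by (simp add: field_simps power2_eq_square)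
  show "0 < u z"
    unfolding u_def by (rule logistic_pos)
next
  show "strict_mono_on {0<..} u"
    unfolding strict_mono_on_def u_def using \<tau>_strict_mono logistic_strict_mono
    by (auto simp: strict_mono_less)
  show "(u \<longlongrightarrow> 0) (at_right 0)"
    unfolding u_def[abs_def] by (rule filterlim_compose[OF tendsto_logistic_at_bot filterlim_\<tau>(1)])
  show "(u \<longlongrightarrow> 1) at_top"
    unfolding u_def[abs_def] by (rule filterlim_compose[OF tendsto_logistic_at_top filterlim_\<tau>(2)])
qed

lemma u_asymp_at_0: "u \<sim>[at_right 0] (\<lambda>z. z powr \<alpha>)"
proof (rule asymp_equivI')
  have "((\<lambda>t. 1 / (1 + exp t) * exp (t - \<alpha> * \<theta> t)) \<longlongrightarrow> 1 * exp 0) at_bot"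
  proof (intro tendsto_mult tendsto_exp \<theta>_at_bot)
    show "((\<lambda>t::real. 1 / (1 + exp t)) \<longlongrightarrow> 1) at_bot" by real_asymp
  qed
  hence "((\<lambda>z. 1 / (1 + exp (\<tau> z)) * exp (\<tau> z - \<alpha> * \<theta> (\<tau> z))) \<longlongrightarrow> 1) (at_right 0)"
    using filterlim_compose[OF _ filterlim_\<tau>(1)] by simp
  moreover have "\<forall>\<^sub>F z in at_right 0. 1 / (1 + exp (\<tau> z)) * exp (\<tau> z - \<alpha> * \<theta> (\<tau> z)) = u z / z powr \<alpha>"
    using eventually_at_right_less[of 0]
    by eventually_elim (simp add: \<theta>_\<tau> u_def logistic_def powr_def exp_diff field_simps)
  ultimately show "((\<lambda>z. u z / z powr \<alpha>) \<longlongrightarrow> 1) (at_right 0)"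
    by (rule Lim_transform_eventually)
qed

lemma u_asymp_at_top: "\<exists>c. (\<lambda>z. 1 - u z) \<sim>[at_top] (\<lambda>z. c * z powr (- \<alpha>h))"
proof -
  obtain L where L: "((\<lambda>t. t - \<alpha>h * \<theta> t) \<longlongrightarrow> L) at_top"
    using \<theta>_at_top by blast
  have "((\<lambda>t. exp t / (1 + exp t) * exp (- (t - \<alpha>h * \<theta> t))) \<longlongrightarrow> 1 * exp (- L)) at_top"
  proof (intro tendsto_mult tendsto_exp tendsto_minus L)
    show "((\<lambda>t::real. exp t / (1 + exp t)) \<longlongrightarrow> 1) at_top" by real_asymp
  qed
  hence "((\<lambda>z. exp (\<tau> z) / (1 + exp (\<tau> z)) * exp (- (\<tau> z - \<alpha>h * \<theta> (\<tau> z)))) \<longlongrightarrow> exp (- L)) at_top"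
    using filterlim_compose[OF _ filterlim_\<tau>(2)] by simp
  moreover have "\<forall>\<^sub>F z in at_top. exp (\<tau> z) / (1 + exp (\<tau> z)) * exp (- (\<tau> z - \<alpha>h * \<theta> (\<tau> z)))
      = (1 - u z) / z powr (- \<alpha>h)"
    using eventually_gt_at_top[of 0]
    by eventually_elim (simp add: \<theta>_\<tau> u_def one_minus_logistic powr_def exp_diff exp_minus field_simps)
  ultimately have "((\<lambda>z. (1 - u z) / z powr (- \<alpha>h)) \<longlongrightarrow> exp (- L)) at_top"
    by (rule Lim_transform_eventually)
  hence "(\<lambda>z. 1 - u z) \<sim>[at_top] (\<lambda>z. exp (- L) * z powr (- \<alpha>h))"
    by (rule asymp_equivI'_const) simp
  thus ?thesis by blast
qed


section \<open>Uniqueness up to dilation\<close>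

definition defect :: "(real \<Rightarrow> real) \<Rightarrow> real \<Rightarrow> real" where
  "defect v z = integral {0..1} (\<lambda>r. v (z * r)) - average (logit (v z))"

lemma has_real_derivative_defect:
  assumes v: "is_profile \<beta> v" and z: "0 < z"
  shows "(defect v has_real_derivative - defect v z / (z * (1 - 2 * s (logit (v z))))) (at z)"
proof -
  define W where "W = integral {0..1} (\<lambda>r. v (z * r))"
  define a where "a = s (logit (v z))"
  have v01: "0 < v z" "v z < 1"
    using profile_between_0_1[OF v z] by auto
  have nz: "1 - 2 * a \<noteq> 0" "v z * (1 - v z) \<noteq> 0" "\<beta> \<noteq> 0" "z \<noteq> 0"
    using orbit_denominator(3)[of "logit (v z)"] v01 beta_pos z unfolding a_def by auto
  have d: "(defect v has_real_derivative (v z - W) / z - logistic (logit (v z)) * (1 - logistic (logit (v z)))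
      * (\<beta> * a / (1 - 2 * a)) * (deriv v z / (v z * (1 - v z)))) (at z)"
    unfolding defect_def[abs_def] W_def a_def
    by (rule DERIV_diff[OF profile_mean_has_derivative[OF v z] DERIV_chain2[OF has_real_derivative_average
          has_real_derivative_logit[OF profile_has_derivative[OF v z] v01]]])
  have "\<beta> * z * deriv v z + (v z)\<^sup>2 + v z = 2 * W"
    using v z unfolding is_profile_def W_def by blast
  hence dv: "deriv v z = (2 * W - (v z)\<^sup>2 - v z) / (\<beta> * z)"
    using nz by (simp add: field_simps)
  have cancel: "c * p * (d / c) = p * d" if "c \<noteq> 0" for c p d :: real
    using that by (simp add: field_simps)
  have "(v z - W) / z - logistic (logit (v z)) * (1 - logistic (logit (v z)))
      * (\<beta> * a / (1 - 2 * a)) * (deriv v z / (v z * (1 - v z)))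
      = (v z - W) / z - a * (2 * W - (v z)\<^sup>2 - v z) / ((1 - 2 * a) * z)"
    using nz unfolding logistic_logit[OF v01] cancel[OF nz(2)] dv by (simp add: field_simps)
  also have "\<dots> = - defect v z / (z * (1 - 2 * a))"
    using nz unfolding defect_def average_def logistic_logit[OF v01] a_def[symmetric] W_def[symmetric]
    by (simp add: field_simps power2_eq_square)
  finally show ?thesis
    using d unfolding a_def by (simp add: DERIV_cong)
qed

lemma defect_sq_antimono:
  assumes v: "is_profile \<beta> v" and "0 < a" "a \<le> b"
  shows "(defect v b)\<^sup>2 \<le> (defect v a)\<^sup>2"
proof (rule DERIV_nonpos_imp_nonincreasing[OF \<open>a \<le> b\<close>])
  fix y assume "a \<le> y"
  hence y: "0 < y" using \<open>0 < a\<close> by simp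
  define d where "d = - defect v y / (y * (1 - 2 * s (logit (v y))))"
  have "0 < y * (1 - 2 * s (logit (v y)))"
    using y orbit_denominator(3) by simp
  hence "2 * defect v y * d \<le> 0"
    unfolding d_def by (simp add: mult_le_0_iff divide_simps)
  moreover have "((\<lambda>y. (defect v y)\<^sup>2) has_real_derivative 2 * defect v y * d) (at y)"
    using DERIV_power[OF has_real_derivative_defect[OF v y], of 2] unfolding d_def by (simp add: mult_ac)
  ultimately show "\<exists>d. ((\<lambda>y. (defect v y)\<^sup>2) has_real_derivative d) (at y) \<and> d \<le> 0" by blast
qed

lemma abs_defect_le: "is_profile \<beta> v \<Longrightarrow> 0 < z \<Longrightarrow> \<bar>defect v z\<bar> \<le> v z"
  using average_bounds[of "logit (v z)"] profile_mean_bounds[of \<beta> v z] profile_between_0_1[of \<beta> v z]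
  unfolding defect_def by (auto simp: logistic_logit)

lemma defect_eq_0:
  assumes v: "is_profile \<beta> v" and "0 < z"
  shows "defect v z = 0"
proof (rule ccontr)
  assume "defect v z \<noteq> 0"
  have "(v \<longlongrightarrow> 0) (at_right 0)"
    using v unfolding is_profile_def by blast
  hence "\<forall>\<^sub>F y in at_right 0. v y < \<bar>defect v z\<bar>"
    using \<open>defect v z \<noteq> 0\<close> by (intro order_tendstoD(2)) auto
  moreover have "\<forall>\<^sub>F y in at_right 0. 0 < y \<and> y < z"
    using \<open>0 < z\<close> unfolding eventually_at_right_field by blast
  ultimately have "\<forall>\<^sub>F y in at_right 0. v y < \<bar>defect v z\<bar> \<and> 0 < y \<and> y < z"
    by eventually_elim auto
  then obtain y where y: "v y < \<bar>defect v z\<bar>" "0 < y" "y < z"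
    using eventually_happens[of _ "at_right (0::real)"] by auto
  have "(defect v z)\<^sup>2 \<le> (defect v y)\<^sup>2"
    using defect_sq_antimono[OF v] y by simp
  also have "\<dots> \<le> (v y)\<^sup>2"
    using abs_defect_le[OF v y(2)] by (simp add: power2_le_iff_abs_le abs_le_iff)
  also have "\<dots> < \<bar>defect v z\<bar>\<^sup>2"
    using y profile_between_0_1[OF v y(2)] by (intro power_strict_mono) auto
  finally show False by simp
qed

lemma has_real_derivative_\<theta>_logit_profile:
  assumes v: "is_profile \<beta> v" and z: "0 < z"
  shows "((\<lambda>z. \<theta> (logit (v z))) has_real_derivative 1 / z) (at z)"
proof -
  define a where "a = s (logit (v z))"
  have v01: "0 < v z" "v z < 1"
    using profile_between_0_1[OF v z] by auto
  have nz: "1 - 2 * a \<noteq> 0" "v z * (1 - v z) \<noteq> 0" "\<beta> \<noteq> 0" "z \<noteq> 0"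
    using orbit_denominator(3)[of "logit (v z)"] v01 beta_pos z unfolding a_def by auto
  have "\<beta> * z * deriv v z + (v z)\<^sup>2 + v z = 2 * average (logit (v z))"
    using v z defect_eq_0[OF v z] unfolding is_profile_def defect_def by auto
  hence "deriv v z * (\<beta> * z) = (1 - 2 * a) * (v z * (1 - v z))"
    unfolding average_def logistic_logit[OF v01] a_def by (simp add: algebra_simps power2_eq_square)
  hence q: "deriv v z / (v z * (1 - v z)) = (1 - 2 * a) / (\<beta> * z)"
    using nz by (simp add: frac_eq_eq)
  have "\<beta> / (1 - 2 * a) * (deriv v z / (v z * (1 - v z))) = 1 / z"
    unfolding q using nz by (simp add: field_simps)
  thus ?thesis
    using DERIV_chain2[OF has_real_derivative_\<theta> has_real_derivative_logit[OF profile_has_derivative[OF v z] v01]]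
    unfolding a_def by simp
qed

lemma profile_unique:
  assumes v: "is_profile \<beta> v"
  shows "\<exists>c>0. \<forall>z>0. v z = u (c * z)"
proof -
  have "((\<lambda>z. \<theta> (logit (v z)) - ln z) has_real_derivative 0) (at z)" if "0 < z" for z
    using DERIV_diff[OF has_real_derivative_\<theta>_logit_profile[OF v that] DERIV_ln_divide[OF that]] by simp
  then obtain c where c: "\<And>z. z \<in> {0<..} \<Longrightarrow> \<theta> (logit (v z)) - ln z = c"
    using has_field_derivative_zero_constant[of "{0<..}" "\<lambda>z. \<theta> (logit (v z)) - ln z"]
    by (force intro: has_field_derivative_at_within)
  have "v z = u (exp c * z)" if z: "0 < z" for z
  proof -
    have "\<theta> (logit (v z)) = ln (exp c * z)"
      using c[of z] z by (simp add: ln_mult)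
    hence "\<tau> (exp c * z) = logit (v z)"
      unfolding \<tau>_def by (metis inv_f_f strict_mono_on_imp_inj_on \<theta>_strict_mono)
    thus ?thesis
      unfolding u_def using logistic_logit profile_between_0_1[OF v z] by simp
  qed
  thus ?thesis
    using exp_gt_zero by blast
qed

end

theorem lemma5p1:
  fixes \<beta> \<alpha> \<alpha>h :: real
  assumes "\<beta> > 0"
    and "0 < \<alpha>" "\<alpha> < 1" "\<beta> = (1 - \<alpha>) / (\<alpha> * (1 + \<alpha>))"
    and "0 < \<alpha>h" "\<alpha>h < 1/3" "\<beta> = (1 - 3 * \<alpha>h) / (\<alpha>h * (1 - \<alpha>h))"
  shows "\<exists>u. is_profile \<beta> u
           \<and> (\<forall>v. is_profile \<beta> v \<longrightarrow> (\<exists>c>0. \<forall>z>0. v z = u (c * z)))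
           \<and> (u \<sim>[at_right 0] (\<lambda>z. z powr \<alpha>))
           \<and> (\<exists>ch. (\<lambda>z. 1 - u z) \<sim>[at_top] (\<lambda>z. ch * z powr (- \<alpha>h)))"
proof -
  interpret profile_exponents \<beta> \<alpha> \<alpha>h
    by unfold_locales (use assms in auto)
  obtain s where "\<And>t. (s has_real_derivative F (logistic t) (s t)) (at t)"
    and "\<And>t. s0 \<le> s t" "\<And>t. s t \<le> s1" "\<And>t. s t - s0 \<le> exp t / slope_lo"
    using connecting_orbit_exists by blast
  then interpret connecting_orbit \<beta> \<alpha> \<alpha>h s
    by unfold_locales
  show ?thesis
    using u_is_profile profile_unique u_asymp_at_0 u_asymp_at_top by blast
qed

end
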